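(* Let $A\in\mathbb R^{N\times 2d}$ and let $K:\mathbb T^N\to\mathbb R^{2d}$ be continuous. Suppose that for every $\omega\in\mathbb T^N$ the map $x\mapsto\Phi(x,\omega)=x+K(\omega+Ax\bmod1)$ is a symplectic twist diffeomorphism of $\mathbb R^{2d}$. Then $\widehat\Phi(\cdot,\omega)-\mathrm{id}$ is quasiperiodic.
   Context: Points of $\mathbb R^{2d}$ are written $(q,p)$, $q,p\in\mathbb R^d$, symplectic form $\sum dq_i\wedge dp_i$; $\mathbb T^N=[0,1]^N$ with $0=1$. A symplectic diffeomorphism $\Phi=(Q,P)$ is twist if for every $p$ the map $q\mapsto Q(q,p)$ is a diffeomorphism of $\mathbb R^d$; $\hat q(Q,p)$ denotes its inverse, $\hat P(Q,p)=P(\hat q(Q,p),p)$, and $\widehat\Phi(Q,p)=(\hat q(Q,p),\hat P(Q,p))$. A function $g:\mathbb R^{2d}\to\mathbb R^{2d}$ is quasiperiodic if $g(x)=\gamma(c+Bx)$ for some $M$, some continuous $\mathbb Z^M$-periodic $\gamma:\mathbb R^M\to\mathbb R^{2d}$, some $c\in\mathbb R^M$ and some matrix $B\in\mathbb R^{M\times2d}$. *)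

theory Defs
  imports "HOL-Analysis.Analysis"
begin

text \<open>Points of R^{2d} are pairs (q,p) with q, p :: real^'d.\<close>

definition symp_form :: "(real^'d) \<times> (real^'d) \<Rightarrow> (real^'d) \<times> (real^'d) \<Rightarrow> real" where
  "symp_form u v = fst u \<bullet> snd v - snd u \<bullet> fst v"

definition C1_diffeo :: "('a::euclidean_space \<Rightarrow> 'a) \<Rightarrow> bool" where
  "C1_diffeo f \<longleftrightarrow> bij f
     \<and> (\<exists>f' :: 'a \<Rightarrow> 'a \<Rightarrow>\<^sub>L 'a. continuous_on UNIV f'
           \<and> (\<forall>x. (f has_derivative blinfun_apply (f' x)) (at x)))
     \<and> (\<exists>g' :: 'a \<Rightarrow> 'a \<Rightarrow>\<^sub>L 'a. continuous_on UNIV g'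
           \<and> (\<forall>x. (inv f has_derivative blinfun_apply (g' x)) (at x)))"

definition symplectic_diffeo :: "((real^'d) \<times> (real^'d) \<Rightarrow> (real^'d) \<times> (real^'d)) \<Rightarrow> bool" where
  "symplectic_diffeo f \<longleftrightarrow> C1_diffeo f
     \<and> (\<forall>x. \<forall>D. (f has_derivative D) (at x) \<longrightarrow> (\<forall>u v. symp_form (D u) (D v) = symp_form u v))"

definition symplectic_twist :: "((real^'d) \<times> (real^'d) \<Rightarrow> (real^'d) \<times> (real^'d)) \<Rightarrow> bool" where
  "symplectic_twist f \<longleftrightarrow> symplectic_diffeo f \<and> (\<forall>p. C1_diffeo (\<lambda>q. fst (f (q, p))))"

definition hat_q :: "((real^'d) \<times> (real^'d) \<Rightarrow> (real^'d) \<times> (real^'d)) \<Rightarrow> real^'d \<Rightarrow> real^'d \<Rightarrow> real^'d" where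
  "hat_q f Q p = inv (\<lambda>q. fst (f (q, p))) Q"

definition hat_P :: "((real^'d) \<times> (real^'d) \<Rightarrow> (real^'d) \<times> (real^'d)) \<Rightarrow> real^'d \<Rightarrow> real^'d \<Rightarrow> real^'d" where
  "hat_P f Q p = snd (f (hat_q f Q p, p))"

definition hat_Phi :: "((real^'d) \<times> (real^'d) \<Rightarrow> (real^'d) \<times> (real^'d)) \<Rightarrow> (real^'d) \<times> (real^'d) \<Rightarrow> (real^'d) \<times> (real^'d)" where
  "hat_Phi f y = (hat_q f (fst y) (snd y), hat_P f (fst y) (snd y))"

text \<open>Quasiperiodic: g x = gamma (c + B x) with gamma continuous and Z^M-periodic on R^M.
  R^M is represented as the functions nat \<Rightarrow> real vanishing from index M on
  (with the product topology, i.e. the Euclidean topology of R^M); B is given by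
  its rows b 0, ..., b (M-1).\<close>
definition quasiperiodic :: "('a::euclidean_space \<Rightarrow> 'b::topological_space) \<Rightarrow> bool" where
  "quasiperiodic g \<longleftrightarrow> (\<exists>(M::nat) (\<gamma>::(nat \<Rightarrow> real) \<Rightarrow> 'b) (c::nat \<Rightarrow> real) (b::nat \<Rightarrow> 'a).
     continuous_on {y. \<forall>i\<ge>M. y i = 0} \<gamma>
     \<and> (\<forall>y. (\<forall>i\<ge>M. y i = 0) \<longrightarrow> (\<forall>i<M. \<gamma> (y(i := y i + 1)) = \<gamma> y))
     \<and> (\<forall>x. g x = \<gamma> (\<lambda>i. if i < M then c i + b i \<bullet> x else 0)))"

end

theory Submission
  imports Defs
begin

text \<open>Write \<open>K = (K\<^sub>1, K\<^sub>2)\<close> and \<open>L u = A (u, 0)\<close>. Since \<open>A\<close> is linear, the twist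
  equation \<open>Q(Q + u, p) = Q\<close> reads \<open>u + K\<^sub>1(\<phi> + L u) = 0\<close> with \<open>\<phi> = \<omega> + A (Q, p)\<close>; by the
  twist condition at \<open>p = 0\<close> for the phase \<open>\<phi>\<close> it has a unique solution \<open>u = U \<phi>\<close>. Hence
  \<open>\<Phi>\<close>-hat minus the identity is \<open>y \<mapsto> \<Gamma>(\<omega> + A y)\<close> with \<open>\<Gamma> \<phi> = (U \<phi>, K\<^sub>2(\<phi> + L (U \<phi>)))\<close>.
  \<open>\<Gamma>\<close> inherits \<open>\<int>\<^sup>N\<close>-periodicity from \<open>K\<close>, and it is continuous because \<open>U\<close> is bounded
  by \<open>sup |K|\<close> and has a closed graph.\<close>

lemma periodic_translate_int_axis:
  assumes per: "\<And>\<omega> i. K (\<omega> + axis i 1) = K \<omega>"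
  shows "K (\<omega> + of_int k *\<^sub>R axis i 1) = K \<omega>"
proof (induction k arbitrary: \<omega> rule: int_induct[where k = 0])
  case (step1 k)
  have "\<omega> + of_int (k + 1) *\<^sub>R axis i 1 = (\<omega> + of_int k *\<^sub>R axis i 1) + axis i 1"
    by (simp add: algebra_simps)
  then show ?case using per step1 by metis
next
  case (step2 k)
  have "\<omega> + of_int k *\<^sub>R axis i 1 = (\<omega> + of_int (k - 1) *\<^sub>R axis i 1) + axis i 1"
    by (simp add: algebra_simps)
  then show ?case using per step2 by metis
qed simp

lemma periodic_translate_int_vector:
  fixes K :: "real^'n::finite \<Rightarrow> 'b"
  assumes per: "\<And>\<omega> i. K (\<omega> + axis i 1) = K \<omega>"
  shows "K (\<omega> + (\<chi> i. of_int (k i))) = K \<omega>"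
proof -
  have "K (\<omega> + (\<Sum>i\<in>S. of_int (k i) *\<^sub>R axis i 1)) = K \<omega>" if "finite S" for S
    using that
  proof (induction S arbitrary: \<omega>)
    case (insert j S)
    have "\<omega> + (\<Sum>i\<in>insert j S. of_int (k i) *\<^sub>R axis i 1)
        = (\<omega> + (\<Sum>i\<in>S. of_int (k i) *\<^sub>R axis i 1)) + of_int (k j) *\<^sub>R axis j 1"
      using insert.hyps by (simp add: algebra_simps)
    then show ?case
      by (simp only: periodic_translate_int_axis[where K = K, OF per] insert.IH)
  qed simp
  moreover have "(\<Sum>i\<in>UNIV. of_int (k i) *\<^sub>R axis i 1) = (\<chi> i. (of_int (k i) :: real))"
    by (simp add: vec_eq_iff axis_def if_distrib cong: if_cong)
  ultimately show ?thesis by (metis finite)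
qed

lemma bounded_range_periodic:
  fixes K :: "real^'n::finite \<Rightarrow> 'b::real_normed_vector"
  assumes cont: "continuous_on UNIV K" and per: "\<And>\<omega> i. K (\<omega> + axis i 1) = K \<omega>"
  shows "bounded (range K)"
proof -
  have "K \<omega> \<in> K ` cbox 0 (\<chi> i. 1)" for \<omega>
  proof
    let ?k = "\<lambda>i. \<lfloor>\<omega> $ i\<rfloor>"
    show "\<omega> - (\<chi> i. of_int (?k i)) \<in> cbox 0 (\<chi> i. 1)"
      by (auto simp: mem_box_cart) linarith+
    show "K \<omega> = K (\<omega> - (\<chi> i. of_int (?k i)))"
      using periodic_translate_int_vector[where K = K, OF per, of "\<omega> - (\<chi> i. of_int (?k i))" ?k] by simp
  qed
  then have "range K \<subseteq> K ` cbox 0 (\<chi> i. 1)" by blast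
  moreover have "compact (K ` cbox 0 (\<chi> i. 1))"
    using cont by (intro compact_continuous_image) (auto intro: continuous_on_subset)
  ultimately show ?thesis by (meson bounded_subset compact_imp_bounded)
qed

lemma continuous_on_bounded_implicit_function:
  fixes U :: "'a::euclidean_space \<Rightarrow> 'b::euclidean_space" and g :: "'a \<times> 'b \<Rightarrow> 'c::t2_space"
  assumes cont: "continuous_on UNIV g"
    and root: "\<And>x u. g (x, u) = c \<longleftrightarrow> u = U x"
    and bdd: "bounded (range U)"
  shows "continuous_on UNIV U"
proof -
  obtain B where B: "\<And>x. U x \<in> cball 0 B"
    using bdd by (auto simp: bounded_iff)
  have "range (\<lambda>x. (x, U x)) = {z. g z = c}"
    using root by auto
  moreover have "closed {z. g z = c}"
    using cont by (intro closed_Collect_eq) auto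
  ultimately show ?thesis
    using B by (intro continuous_from_closed_graph[of "cball 0 B"]) auto
qed

lemma quasiperiodic_periodic_comp_linear:
  fixes \<Gamma> :: "real^'n::finite \<Rightarrow> 'b::topological_space" and A :: "'n \<Rightarrow> 'a::euclidean_space"
  assumes cont: "continuous_on UNIV \<Gamma>" and per: "\<And>\<phi> i. \<Gamma> (\<phi> + axis i 1) = \<Gamma> \<phi>"
  shows "quasiperiodic (\<lambda>x. \<Gamma> (c + (\<chi> i. A i \<bullet> x)))"
proof -
  define M where "M = CARD('n)"
  obtain e where e: "bij_betw e {0..<M} (UNIV :: 'n set)"
    using ex_bij_betw_nat_finite[of "UNIV :: 'n set"] by (auto simp: M_def)
  define ix where "ix = inv_into {0..<M} e"
  have ix_lt: "ix j < M" and e_ix: "e (ix j) = j" for j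
    using e bij_betw_inv_into_right[OF e] inv_into_into[of j e "{0..<M}"]
    by (auto simp: ix_def bij_betw_def)
  have ix_e: "i < M \<Longrightarrow> ix (e i) = i" for i
    using e by (simp add: ix_def bij_betw_inv_into_left)
  define to_vec where "to_vec = (\<lambda>y :: nat \<Rightarrow> real. (\<chi> j. y (ix j)) :: real^'n)"
  have "continuous_on UNIV to_vec"
    unfolding to_vec_def
    by (intro continuous_intros continuous_on_compose2[OF continuous_on_product_coordinates]) auto
  then have "continuous_on {y. \<forall>i\<ge>M. y i = 0} (\<Gamma> \<circ> to_vec)"
    using cont by (intro continuous_on_compose) (auto intro: continuous_on_subset)
  moreover have "(\<Gamma> \<circ> to_vec) (y(i := y i + 1)) = (\<Gamma> \<circ> to_vec) y" if "i < M" for y i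
  proof -
    have "to_vec (y(i := y i + 1)) = to_vec y + axis (e i) 1"
      using ix_e[OF that] e_ix by (auto simp: to_vec_def vec_eq_iff axis_def)
    then show ?thesis by (simp add: per)
  qed
  moreover have "to_vec (\<lambda>i. if i < M then c $ e i + A (e i) \<bullet> x else 0) = c + (\<chi> i. A i \<bullet> x)" for x
    by (simp add: to_vec_def vec_eq_iff ix_lt e_ix)
  ultimately show ?thesis
    unfolding quasiperiodic_def
    by (intro exI[of _ M] exI[of _ "\<Gamma> \<circ> to_vec"] exI[of _ "\<lambda>i. c $ e i"] exI[of _ "\<lambda>i. A (e i)"]) auto
qed

lemma symplectic_twist_bij_fst:
  assumes "symplectic_twist f"
  shows "bij (\<lambda>q. fst (f (q, p)))"
proof -
  have "C1_diffeo (\<lambda>q. fst (f (q, p)))"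
    using assms by (simp add: symplectic_twist_def)
  then show ?thesis
    by (simp add: C1_diffeo_def)
qed

text \<open>In the notation of the proof idea, \<open>twist_root K A\<close> is \<open>U\<close> and \<open>twist_hull K A\<close> is \<open>\<Gamma>\<close>.\<close>

definition twist_root :: "(real^'n \<Rightarrow> (real^'d) \<times> (real^'d)) \<Rightarrow> ('n \<Rightarrow> (real^'d) \<times> (real^'d)) \<Rightarrow> real^'n \<Rightarrow> real^'d"
  where "twist_root K A \<phi> = inv (\<lambda>u. u + fst (K (\<phi> + (\<chi> i. A i \<bullet> (u, 0))))) 0"

definition twist_hull :: "(real^'n \<Rightarrow> (real^'d) \<times> (real^'d)) \<Rightarrow> ('n \<Rightarrow> (real^'d) \<times> (real^'d)) \<Rightarrow> real^'n \<Rightarrow> (real^'d) \<times> (real^'d)"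
  where "twist_hull K A \<phi> = (twist_root K A \<phi>, snd (K (\<phi> + (\<chi> i. A i \<bullet> (twist_root K A \<phi>, 0)))))"

lemma twist_root_iff:
  assumes "bij (\<lambda>u. u + fst (K (\<phi> + (\<chi> i. A i \<bullet> (u, 0)))))"
  shows "u + fst (K (\<phi> + (\<chi> i. A i \<bullet> (u, 0)))) = 0 \<longleftrightarrow> u = twist_root K A \<phi>"
  unfolding twist_root_def by (simp add: bij_inv_eq_iff[OF assms])

lemma linear_coords_split:
  "(\<chi> i. A i \<bullet> (q + u, p)) = (\<chi> i. A i \<bullet> (q, p)) + (\<chi> i. A i \<bullet> (u, 0))"
  by (simp add: vec_eq_iff inner_prod_def inner_add_right)

lemma hat_Phi_minus_id_eq_twist_hull:
  assumes bij_q: "\<And>p. bij (\<lambda>q. q + fst (K (\<omega> + (\<chi> i. A i \<bullet> (q, p)))))"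
    and bij_u: "\<And>\<phi>. bij (\<lambda>u. u + fst (K (\<phi> + (\<chi> i. A i \<bullet> (u, 0)))))"
  shows "hat_Phi (\<lambda>x. x + K (\<omega> + (\<chi> i. A i \<bullet> x))) y - y = twist_hull K A (\<omega> + (\<chi> i. A i \<bullet> y))"
proof -
  obtain Q p where y: "y = (Q, p)" by fastforce
  let ?\<Phi> = "\<lambda>x. x + K (\<omega> + (\<chi> i. A i \<bullet> x))"
  define \<phi> where "\<phi> = \<omega> + (\<chi> i. A i \<bullet> (Q, p))"
  define u where "u = twist_root K A \<phi>"
  have angle: "\<omega> + (\<chi> i. A i \<bullet> (Q + u, p)) = \<phi> + (\<chi> i. A i \<bullet> (u, 0))"
    by (simp add: \<phi>_def linear_coords_split add.assoc)
  have "u + fst (K (\<phi> + (\<chi> i. A i \<bullet> (u, 0)))) = 0"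
    using twist_root_iff[OF bij_u] u_def by blast
  then have "fst (?\<Phi> (Q + u, p)) = Q"
    by (simp add: angle)
  then have hat_q: "hat_q ?\<Phi> Q p = Q + u"
    unfolding hat_q_def using bij_inv_eq_iff[OF bij_q[of p], of "Q + u" Q] by auto
  have "hat_Phi ?\<Phi> y - y = (u, snd (K (\<phi> + (\<chi> i. A i \<bullet> (u, 0)))))"
    by (simp add: y hat_Phi_def hat_P_def hat_q angle)
  then show ?thesis
    by (simp add: twist_hull_def u_def \<phi>_def y)
qed

lemma twist_hull_periodic:
  assumes per: "\<And>\<omega> i. K (\<omega> + axis i 1) = K \<omega>"
  shows "twist_hull K A (\<phi> + axis i 1) = twist_hull K A \<phi>"
proof -
  have "K (\<phi> + axis i 1 + v) = K (\<phi> + v)" for v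
    using per by (metis add.commute add.left_commute)
  then show ?thesis by (simp add: twist_hull_def twist_root_def)
qed

lemma continuous_on_twist_hull:
  assumes cont: "continuous_on UNIV K" and per: "\<And>\<omega> i. K (\<omega> + axis i 1) = K \<omega>"
    and bij_u: "\<And>\<phi>. bij (\<lambda>u. u + fst (K (\<phi> + (\<chi> i. A i \<bullet> (u, 0)))))"
  shows "continuous_on UNIV (twist_hull K A)"
proof -
  define g where "g = (\<lambda>z. snd z + fst (K (fst z + (\<chi> i. A i \<bullet> (snd z, 0)))))"
  have cont_g: "continuous_on UNIV g"
    unfolding g_def by (intro continuous_intros continuous_on_compose2[OF cont]) auto
  have root: "g (\<phi>, u) = 0 \<longleftrightarrow> u = twist_root K A \<phi>" for \<phi> u
    using twist_root_iff[OF bij_u] by (simp add: g_def)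
  obtain B where B: "\<And>\<omega>. norm (K \<omega>) \<le> B"
    using bounded_range_periodic[where K = K, OF cont per] by (auto simp: bounded_iff)
  have "norm (twist_root K A \<phi>) \<le> B" for \<phi>
  proof -
    let ?K = "K (\<phi> + (\<chi> i. A i \<bullet> (twist_root K A \<phi>, 0)))"
    have "twist_root K A \<phi> = - fst ?K"
      using root[of \<phi> "twist_root K A \<phi>"] by (simp add: g_def eq_neg_iff_add_eq_0)
    also have "norm (- fst ?K) \<le> norm ?K"
      using norm_fst_le[of "fst ?K" "snd ?K"] by simp
    finally show ?thesis
      using B order.trans by blast
  qed
  then have "bounded (range (twist_root K A))"
    by (intro boundedI) auto
  then have "continuous_on UNIV (twist_root K A)"
    using continuous_on_bounded_implicit_function[OF cont_g root] by blast
  then show ?thesis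
    unfolding twist_hull_def by (intro continuous_intros continuous_on_compose2[OF cont]) auto
qed

theorem proposition5p1:
  fixes A :: "'n::finite \<Rightarrow> (real^'d) \<times> (real^'d)"
    and K :: "real^'n \<Rightarrow> (real^'d) \<times> (real^'d)"
  assumes K_cont: "continuous_on UNIV K"
    and K_per: "\<forall>\<omega> i. K (\<omega> + axis i 1) = K \<omega>"
    and twist: "\<forall>\<omega>. symplectic_twist (\<lambda>x. x + K (\<omega> + (\<chi> i. A i \<bullet> x)))"
  shows "\<forall>\<omega>. quasiperiodic (\<lambda>y. hat_Phi (\<lambda>x. x + K (\<omega> + (\<chi> i. A i \<bullet> x))) y - y)"
proof
  fix \<omega>
  have bij_q: "bij (\<lambda>q. q + fst (K (\<phi> + (\<chi> i. A i \<bullet> (q, p)))))" for \<phi> p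
    using symplectic_twist_bij_fst[OF twist[rule_format, of \<phi>], of p] by simp
  have "(\<lambda>y. hat_Phi (\<lambda>x. x + K (\<omega> + (\<chi> i. A i \<bullet> x))) y - y)
      = (\<lambda>y. twist_hull K A (\<omega> + (\<chi> i. A i \<bullet> y)))"
    using hat_Phi_minus_id_eq_twist_hull[OF bij_q bij_q] by blast
  moreover have "quasiperiodic (\<lambda>y. twist_hull K A (\<omega> + (\<chi> i. A i \<bullet> y)))"
    using continuous_on_twist_hull[where K = K, OF K_cont K_per[rule_format] bij_q]
      twist_hull_periodic[where K = K, OF K_per[rule_format]]
    by (rule quasiperiodic_periodic_comp_linear)
  ultimately show "quasiperiodic (\<lambda>y. hat_Phi (\<lambda>x. x + K (\<omega> + (\<chi> i. A i \<bullet> x))) y - y)"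
    by simp
qed

end
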